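(* For any continuous probability measure $\mu$ on $\mathbb{R}^n$ and any $\alpha_1,\ldots,\alpha_4\in(0,1)$ with $\sum_{i=1}^4\alpha_i=1$, there exist two oriented hyperplanes $H_1,H_2$ such that $H_1^+\cap H_2^+$, $H_1^-\cap H_2^+$, $H_1^+\cap H_2^-$, $H_1^-\cap H_2^-$ have $\mu$-measure $\alpha_1,\alpha_2,\alpha_3,\alpha_4$, respectively.
   Context: A continuous probability measure on $\mathbb{R}^n$ is a Borel probability measure absolutely continuous with respect to Lebesgue measure. For an oriented hyperplane $H$, $H^+$ denotes the closed half-space in the direction of its normal and $H^-$ the closed half-space in the direction of the reverse normal. *)

theory Defs
  imports "HOL-Probability.Probability"
begin

text \<open>An oriented hyperplane is given by a nonzero normal vector u and offset c:
  H = {x. u \<bullet> x = c}.\<close>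

definition oriented_hyperplane :: "'a::euclidean_space \<times> real \<Rightarrow> bool" where
  "oriented_hyperplane H \<longleftrightarrow> fst H \<noteq> 0"

definition hpos :: "'a::euclidean_space \<times> real \<Rightarrow> 'a set" where
  "hpos H = {x. fst H \<bullet> x \<ge> snd H}"

definition hneg :: "'a::euclidean_space \<times> real \<Rightarrow> 'a set" where
  "hneg H = {x. fst H \<bullet> x \<le> snd H}"

definition continuous_prob_measure :: "'a::euclidean_space measure \<Rightarrow> bool" where
  "continuous_prob_measure \<mu> \<longleftrightarrow>
     prob_space \<mu> \<and> sets \<mu> = sets borel \<and> absolutely_continuous lborel \<mu>"

end

theory Submission
  imports Defs
begin

text \<open>Choose the first hyperplane orthogonal to a unit vector \<open>e\<^sub>1\<close> so that it cuts \<open>\<mu>\<close> into a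
  part \<open>P\<close> of mass \<open>\<alpha>\<^sub>1 + \<alpha>\<^sub>3\<close> and a part \<open>N\<close> of mass \<open>\<alpha>\<^sub>2 + \<alpha>\<^sub>4\<close>. Rotate the normal \<open>v\<close> of
  the second hyperplane by half a turn from \<open>e\<^sub>1\<close> to \<open>-e\<^sub>1\<close> in a plane containing \<open>e\<^sub>1\<close>, and for
  each position choose an offset such that the part of \<open>P\<close> on the positive side has mass \<open>\<alpha>\<^sub>1\<close>.
  The positive part of \<open>N\<close> then has mass \<open>0\<close> at the start and \<open>\<alpha>\<^sub>2 + \<alpha>\<^sub>4\<close> at the end. Since
  hyperplanes are \<open>\<mu>\<close>-null, all masses depend continuously on normal and offset; the offsets
  are not unique, but they stay in a compact range, so the positions admitting a choice with
  \<open>N\<close>-mass \<open>\<le> \<alpha>\<^sub>2\<close> resp. \<open>\<ge> \<alpha>\<^sub>2\<close> form two closed sets covering \<open>[0, 1]\<close>. By connectedness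
  they meet, and between the two offsets at a common position an intermediate one gives exactly
  \<open>\<alpha>\<^sub>2\<close>.\<close>

lemma eventually_same_side_of_hyperplane:
  assumes "v \<bullet> x \<noteq> d" and "vn \<longlonglongrightarrow> v" and "dn \<longlonglongrightarrow> d"
  shows "eventually (\<lambda>n. (dn n \<le> vn n \<bullet> x) = (d \<le> v \<bullet> x)) sequentially"
proof -
  have lim: "(\<lambda>n. vn n \<bullet> x - dn n) \<longlonglongrightarrow> v \<bullet> x - d"
    by (intro tendsto_intros assms)
  consider "0 < v \<bullet> x - d" | "v \<bullet> x - d < 0"
    using assms(1) by linarith
  then show ?thesis
  proof cases
    case 1
    show ?thesis
      using order_tendstoD(1)[OF lim 1] by eventually_elim (use 1 in auto)
  next
    case 2
    show ?thesis
      using order_tendstoD(2)[OF lim 2] by eventually_elim (use 2 in auto)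
  qed
qed

locale continuous_prob_space = prob_space M for M :: "'a::euclidean_space measure" +
  assumes sets_eq_borel: "sets M = sets borel"
    and absolutely_continuous: "absolutely_continuous lborel M"
begin

lemma space_eq_UNIV [simp]: "space M = UNIV"
  using sets_eq_imp_space_eq[OF sets_eq_borel] by simp

lemma sets_iff_borel [simp, measurable_cong]: "A \<in> sets M \<longleftrightarrow> A \<in> sets borel"
  using sets_eq_borel by simp

lemma hyperplane_in_null_sets:
  assumes "v \<noteq> 0"
  shows "{x. v \<bullet> x = d} \<in> null_sets M"
proof -
  have "{x. v \<bullet> x = d} \<in> null_sets lebesgue"
    using negligible_hyperplane[of v d] assms negligible_iff_null_sets by blast
  then have "{x. v \<bullet> x = d} \<in> null_sets lborel"
    using null_sets_completion_iff[of _ lborel] borel_closed closed_hyperplane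
    by (metis sets_lborel)
  then show ?thesis
    using absolutely_continuous unfolding absolutely_continuous_def by blast
qed

lemma AE_off_hyperplane: "v \<noteq> 0 \<Longrightarrow> AE x in M. v \<bullet> x \<noteq> d"
  using AE_not_in[OF hyperplane_in_null_sets] by simp

definition upper_mass :: "'a set \<Rightarrow> 'a \<Rightarrow> real \<Rightarrow> real" where
  "upper_mass A v d = prob (A \<inter> {x. d \<le> v \<bullet> x})"

lemma upper_mass_antimono:
  assumes "A \<in> sets borel" and "d \<le> d'"
  shows "upper_mass A v d' \<le> upper_mass A v d"
  unfolding upper_mass_def using assms by (intro finite_measure_mono) auto

lemma lower_mass_eq:
  assumes A: "A \<in> sets borel" and "v \<noteq> 0"
  shows "prob (A \<inter> {x. v \<bullet> x \<le> d}) = prob A - upper_mass A v d"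
proof -
  have strict: "upper_mass A v d = prob (A \<inter> {x. d < v \<bullet> x})"
    unfolding upper_mass_def
  proof (rule measure_eq_AE)
    show "AE x in M. (x \<in> A \<inter> {x. d \<le> v \<bullet> x}) = (x \<in> A \<inter> {x. d < v \<bullet> x})"
      using AE_off_hyperplane[OF \<open>v \<noteq> 0\<close>, of d] by eventually_elim auto
  qed (use A in \<open>auto simp: borel_open open_halfspace_gt\<close>)
  have split: "A = (A \<inter> {x. v \<bullet> x \<le> d}) \<union> (A \<inter> {x. d < v \<bullet> x})"
    by auto
  have "prob A = prob (A \<inter> {x. v \<bullet> x \<le> d}) + prob (A \<inter> {x. d < v \<bullet> x})"
    by (subst split, rule finite_measure_Union) (use A in \<open>auto simp: borel_open open_halfspace_gt\<close>)
  then show ?thesis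
    using strict by simp
qed

lemma tendsto_upper_mass:
  assumes A: "A \<in> sets borel" and v: "vn \<longlonglongrightarrow> v" "v \<noteq> 0" and d: "dn \<longlonglongrightarrow> d"
  shows "(\<lambda>n. upper_mass A (vn n) (dn n)) \<longlonglongrightarrow> upper_mass A v d"
proof -
  let ?S = "\<lambda>w c. A \<inter> {x. c \<le> w \<bullet> x}"
  have "(\<lambda>n. integral\<^sup>L M (indicator (?S (vn n) (dn n)) :: 'a \<Rightarrow> real))
      \<longlonglongrightarrow> integral\<^sup>L M (indicator (?S v d))"
  proof (rule integral_dominated_convergence[where w="\<lambda>_. 1"])
    show "AE x in M. (\<lambda>n. indicator (?S (vn n) (dn n)) x :: real) \<longlonglongrightarrow> indicator (?S v d) x"
      using AE_off_hyperplane[OF v(2), of d]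
    proof eventually_elim
      case (elim x)
      show ?case
        using eventually_same_side_of_hyperplane[OF elim v(1) d]
        by (intro tendsto_eventually) (auto elim!: eventually_mono simp: indicator_def)
    qed
  qed (use A in \<open>auto simp: indicator_def intro!: borel_measurable_indicator\<close>)
  then show ?thesis
    by (simp add: upper_mass_def)
qed

lemma isCont_upper_mass:
  assumes "A \<in> sets borel" and "v \<noteq> 0"
  shows "isCont (upper_mass A v) d"
  unfolding continuous_at_sequentially comp_def
  using tendsto_upper_mass[OF assms(1) tendsto_const assms(2)] by blast

lemma exists_small_tail: "0 < e \<Longrightarrow> \<exists>R\<ge>0. prob {x. R < norm x} < e"
proof -
  assume "0 < e"
  have "(\<lambda>n. prob {x. real n < norm x}) \<longlonglongrightarrow> prob (\<Inter>n. {x::'a. real n < norm x})"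
    by (rule finite_Lim_measure_decseq) (auto simp: decseq_def)
  moreover have "(\<Inter>n. {x::'a. real n < norm x}) = {}"
    by auto (metis reals_Archimedean2 less_asym)
  ultimately have "eventually (\<lambda>n. prob {x. real n < norm x} < e) sequentially"
    using order_tendstoD(2) \<open>0 < e\<close> by simp
  then show ?thesis
    by (meson eventually_sequentially order_refl of_nat_0_le_iff)
qed

lemma upper_mass_le_tail:
  assumes "norm v * R < d"
  shows "upper_mass A v d \<le> prob {x. R < norm x}"
  unfolding upper_mass_def
proof (rule finite_measure_mono)
  show "A \<inter> {x. d \<le> v \<bullet> x} \<subseteq> {x. R < norm x}"
  proof clarify
    fix x assume "d \<le> v \<bullet> x"
    then have "norm v * R < norm v * norm x"
      using assms norm_cauchy_schwarz[of v x] by linarith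
    then show "R < norm x"
      using mult_less_cancel_left[of "norm v" R "norm x"] by simp
  qed
qed simp

lemma prob_minus_tail_le_upper_mass:
  assumes A: "A \<in> sets borel" and "d < - (norm v * R)"
  shows "prob A - prob {x. R < norm x} \<le> upper_mass A v d"
proof -
  have "A \<subseteq> (A \<inter> {x. d \<le> v \<bullet> x}) \<union> {x. R < norm x}"
  proof clarify
    fix x assume "x \<in> A" "\<not> R < norm x"
    then have "norm v * norm x \<le> norm v * R"
      by (simp add: mult_left_mono)
    moreover have "- (v \<bullet> x) \<le> norm v * norm x"
      using norm_cauchy_schwarz[of "-v" x] by simp
    ultimately show "d \<le> v \<bullet> x"
      using assms(2) by linarith
  qed
  then have "prob A \<le> prob ((A \<inter> {x. d \<le> v \<bullet> x}) \<union> {x. R < norm x})"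
    using A by (intro finite_measure_mono) auto
  also have "\<dots> \<le> upper_mass A v d + prob {x. R < norm x}"
    unfolding upper_mass_def using A by (intro measure_Un_le) auto
  finally show ?thesis
    by simp
qed

lemma offset_bounded:
  assumes "A \<in> sets borel" and "upper_mass A v d = a"
    and "prob {x. R < norm x} < a" and "a + prob {x. R < norm x} < prob A"
  shows "\<bar>d\<bar> \<le> norm v * R"
  using upper_mass_le_tail[of v R d A] prob_minus_tail_le_upper_mass[of A d v R] assms
  by linarith

lemma exists_offset:
  assumes A: "A \<in> sets borel" and "v \<noteq> 0" and "0 < a" "a < prob A"
  shows "\<exists>d. upper_mass A v d = a"
proof -
  obtain R where R: "0 \<le> R" "prob {x. R < norm x} < min a (prob A - a)"
    using exists_small_tail[of "min a (prob A - a)"] assms by auto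
  let ?b = "norm v * R + 1"
  have "\<exists>d. - ?b \<le> d \<and> d \<le> ?b \<and> upper_mass A v d = a"
  proof (rule IVT2)
    show "upper_mass A v ?b \<le> a"
      using upper_mass_le_tail[of v R ?b A] R by simp
    show "a \<le> upper_mass A v (- ?b)"
      using prob_minus_tail_le_upper_mass[OF A, of "- ?b" v R] R by simp
    show "- ?b \<le> ?b"
      using R by simp
  qed (use isCont_upper_mass[OF A \<open>v \<noteq> 0\<close>] in blast)
  then show ?thesis
    by blast
qed

lemma closed_offset_choice_set:
  fixes v :: "real \<Rightarrow> 'a"
  assumes P: "P \<in> sets borel" and N: "N \<in> sets borel"
    and v: "continuous_on {0..1} v" "\<And>t. t \<in> {0..1} \<Longrightarrow> norm (v t) = 1"
    and a: "0 < a" "a < prob P" and C: "closed C"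
  shows "closed {t\<in>{0..1}. \<exists>d. upper_mass P (v t) d = a \<and> upper_mass N (v t) d \<in> C}"
  unfolding closed_sequential_limits
proof (intro allI impI, elim conjE)
  obtain R where R: "prob {x. R < norm x} < min a (prob P - a)"
    using exists_small_tail[of "min a (prob P - a)"] a by auto
  fix tn l
  assume tn: "\<forall>n. tn n \<in> {t\<in>{0..1}. \<exists>d. upper_mass P (v t) d = a \<and> upper_mass N (v t) d \<in> C}"
    and lim: "tn \<longlonglongrightarrow> l"
  then have t01: "\<And>n. tn n \<in> {0..1}"
    by blast
  from tn have "\<forall>n. \<exists>d. upper_mass P (v (tn n)) d = a \<and> upper_mass N (v (tn n)) d \<in> C"
    by blast
  then obtain dn where dn: "\<And>n. upper_mass P (v (tn n)) (dn n) = a"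
      "\<And>n. upper_mass N (v (tn n)) (dn n) \<in> C"
    by metis
  have "\<bar>dn n\<bar> \<le> R" for n
    using offset_bounded[OF P dn(1)] R v(2)[OF t01] by simp
  then have "\<forall>n. dn n \<in> {-R..R}"
    by (metis abs_le_D1 abs_le_D2 atLeastAtMost_iff minus_le_iff)
  then obtain r dl where r: "strict_mono r" "(dn \<circ> r) \<longlonglongrightarrow> dl"
    using seq_compactE[OF compact_imp_seq_compact[OF compact_Icc]] by metis
  have l01: "l \<in> {0..1}"
    using closed_sequentially[OF closed_atLeastAtMost _ lim] t01 by blast
  have "(v \<circ> (tn \<circ> r)) \<longlonglongrightarrow> v l"
    using v(1) l01 t01 LIMSEQ_subseq_LIMSEQ[OF lim r(1)]
    unfolding continuous_on_sequentially by simp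
  moreover have "v l \<noteq> 0"
    using v(2)[OF l01] by auto
  ultimately have lim_P: "(\<lambda>n. upper_mass P (v (tn (r n))) (dn (r n))) \<longlonglongrightarrow> upper_mass P (v l) dl"
    and lim_N: "(\<lambda>n. upper_mass N (v (tn (r n))) (dn (r n))) \<longlonglongrightarrow> upper_mass N (v l) dl"
    using tendsto_upper_mass[OF P, of "v \<circ> tn \<circ> r"] tendsto_upper_mass[OF N, of "v \<circ> tn \<circ> r"] r(2)
    by (simp_all add: comp_def)
  have "upper_mass P (v l) dl = a"
    using lim_P dn(1) by (simp add: LIMSEQ_const_iff)
  moreover have "upper_mass N (v l) dl \<in> C"
    using closed_sequentially[OF C _ lim_N] dn(2) by blast
  ultimately show "l \<in> {t\<in>{0..1}. \<exists>d. upper_mass P (v t) d = a \<and> upper_mass N (v t) d \<in> C}"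
    using l01 by blast
qed

lemma exists_offset_between:
  assumes P: "P \<in> sets borel" and N: "N \<in> sets borel" and "v \<noteq> 0"
    and d1: "upper_mass P v d1 = a" "upper_mass N v d1 \<le> b"
    and d2: "upper_mass P v d2 = a" "b \<le> upper_mass N v d2"
  shows "\<exists>d. upper_mass P v d = a \<and> upper_mass N v d = b"
proof (cases "d2 \<le> d1")
  case True
  then obtain d where d: "d2 \<le> d" "d \<le> d1" "upper_mass N v d = b"
    using IVT2[of "upper_mass N v" d1 b d2] isCont_upper_mass[OF N \<open>v \<noteq> 0\<close>] d1 d2 by blast
  moreover have "upper_mass P v d = a"
    using upper_mass_antimono[OF P d(1), of v] upper_mass_antimono[OF P d(2), of v] d1 d2
    by linarith
  ultimately show ?thesis
    by blast
next
  case False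
  then have "upper_mass N v d2 \<le> upper_mass N v d1"
    using upper_mass_antimono[OF N] by simp
  then show ?thesis
    using d1 d2 by (intro exI[of _ d2]) simp
qed

lemma exists_rotation_offset:
  fixes v :: "real \<Rightarrow> 'a"
  assumes P: "P \<in> sets borel" and N: "N \<in> sets borel"
    and v: "continuous_on {0..1} v" "\<And>t. t \<in> {0..1} \<Longrightarrow> norm (v t) = 1"
    and a: "0 < a" "a < prob P"
    and start: "\<And>d. upper_mass P (v 0) d = a \<Longrightarrow> upper_mass N (v 0) d \<le> b"
    and stop: "\<And>d. upper_mass P (v 1) d = a \<Longrightarrow> b \<le> upper_mass N (v 1) d"
  shows "\<exists>t d. upper_mass P (v t) d = a \<and> upper_mass N (v t) d = b"
proof -
  define S where "S C = {t\<in>{0..1}. \<exists>d. upper_mass P (v t) d = a \<and> upper_mass N (v t) d \<in> C}"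
    for C
  have v_nonzero: "v t \<noteq> 0" if "t \<in> {0..1}" for t
    using v(2)[OF that] by auto
  have choice: "\<exists>d. upper_mass P (v t) d = a" if "t \<in> {0..1}" for t
    using exists_offset[OF P v_nonzero[OF that] a] .
  have cover: "{0..1} \<subseteq> S {..b} \<union> S {b..}"
  proof
    fix t :: real assume t: "t \<in> {0..1}"
    then obtain d where "upper_mass P (v t) d = a"
      using choice by blast
    moreover have "upper_mass N (v t) d \<in> {..b} \<or> upper_mass N (v t) d \<in> {b..}"
      by auto
    ultimately show "t \<in> S {..b} \<union> S {b..}"
      using t unfolding S_def by blast
  qed
  have closed: "closed (S {..b})" "closed (S {b..})"
    using closed_offset_choice_set[OF P N v a closed_atMost]
      closed_offset_choice_set[OF P N v a closed_atLeast]
    unfolding S_def by auto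
  have "0 \<in> S {..b} \<inter> {0..1}" "1 \<in> S {b..} \<inter> {0..1}"
    using choice[of 0] choice[of 1] start stop unfolding S_def by auto
  then have "S {..b} \<inter> S {b..} \<inter> {0..1} \<noteq> {}"
    using connected_closedD[OF connected_Icc _ cover closed] by blast
  then obtain t d1 d2 where t: "t \<in> {0..1}"
    and "upper_mass P (v t) d1 = a" "upper_mass N (v t) d1 \<le> b"
    and "upper_mass P (v t) d2 = a" "b \<le> upper_mass N (v t) d2"
    unfolding S_def by auto
  then show ?thesis
    using exists_offset_between[OF P N v_nonzero[OF t]] by blast
qed

lemma upper_mass_lower_halfspace_eq_0:
  assumes "upper_mass {x. c \<le> u \<bullet> x} u d < prob {x. c \<le> u \<bullet> x}"
  shows "upper_mass {x. u \<bullet> x \<le> c} u d = 0"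
proof -
  have "c < d"
  proof (rule ccontr)
    assume "\<not> c < d"
    then have "{x. c \<le> u \<bullet> x} \<inter> {x. d \<le> u \<bullet> x} = {x. c \<le> u \<bullet> x}"
      by auto
    then show False
      using assms unfolding upper_mass_def by simp
  qed
  then have "{x. u \<bullet> x \<le> c} \<inter> {x. d \<le> u \<bullet> x} = {}"
    by auto
  then show ?thesis
    unfolding upper_mass_def by simp
qed

lemma upper_mass_lower_halfspace_opposite:
  assumes "0 < upper_mass {x. c \<le> u \<bullet> x} (- u) d"
  shows "upper_mass {x. u \<bullet> x \<le> c} (- u) d = prob {x. u \<bullet> x \<le> c}"
proof -
  have "d \<le> - c"
  proof (rule ccontr)
    assume "\<not> d \<le> - c"
    then have "{x. c \<le> u \<bullet> x} \<inter> {x. d \<le> - u \<bullet> x} = {}"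
      by auto
    then show False
      using assms unfolding upper_mass_def by simp
  qed
  then have "{x. u \<bullet> x \<le> c} \<inter> {x. d \<le> - u \<bullet> x} = {x. u \<bullet> x \<le> c}"
    by auto
  then show ?thesis
    unfolding upper_mass_def by simp
qed

lemma four_quadrants:
  fixes e1 e2 :: 'a
  assumes e: "e1 \<bullet> e1 = 1" "e2 \<bullet> e2 = 1" "e1 \<bullet> e2 = 0"
    and a: "0 < a1" "0 < a2" "0 < a3" "0 < a4" "a1 + a2 + a3 + a4 = 1"
  shows "\<exists>H1 H2. oriented_hyperplane H1 \<and> oriented_hyperplane H2 \<and>
           prob (hpos H1 \<inter> hpos H2) = a1 \<and> prob (hneg H1 \<inter> hpos H2) = a2 \<and>
           prob (hpos H1 \<inter> hneg H2) = a3 \<and> prob (hneg H1 \<inter> hneg H2) = a4"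
proof -
  have "e1 \<noteq> 0"
    using e(1) by auto
  moreover have "prob UNIV = 1"
    using prob_space by simp
  ultimately obtain c where c: "upper_mass UNIV e1 c = a1 + a3"
    using exists_offset[of UNIV e1 "a1 + a3"] a by auto
  define P where "P = {x. c \<le> e1 \<bullet> x}"
  define N where "N = {x. e1 \<bullet> x \<le> c}"
  have P: "P \<in> sets borel" and N: "N \<in> sets borel"
    unfolding P_def N_def by (simp_all add: borel_closed closed_halfspace_ge closed_halfspace_le)
  have prob_P: "prob P = a1 + a3"
    using c by (simp add: upper_mass_def P_def)
  have prob_N: "prob N = a2 + a4"
    using lower_mass_eq[of UNIV e1 c] \<open>e1 \<noteq> 0\<close> \<open>prob UNIV = 1\<close> c a(5)
    unfolding N_def by simp
  define v where "v t = cos (pi * t) *\<^sub>R e1 + sin (pi * t) *\<^sub>R e2" for t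
  have "v t \<bullet> v t = (cos (pi * t))\<^sup>2 + (sin (pi * t))\<^sup>2" for t
    by (simp add: v_def inner_add_left inner_add_right inner_commute e power2_eq_square)
  then have v_norm: "norm (v t) = 1" for t
    by (simp add: norm_eq_sqrt_inner)
  have "continuous_on {0..1} v"
    unfolding v_def by (intro continuous_intros)
  moreover have "upper_mass N (v 0) d \<le> a2" if "upper_mass P (v 0) d = a1" for d
    using upper_mass_lower_halfspace_eq_0[of c e1 d] that prob_P a
    unfolding v_def P_def N_def by simp
  moreover have "a2 \<le> upper_mass N (v 1) d" if "upper_mass P (v 1) d = a1" for d
    using upper_mass_lower_halfspace_opposite[of c e1 d] that prob_N a
    unfolding v_def P_def N_def by simp
  ultimately obtain t d where td: "upper_mass P (v t) d = a1" "upper_mass N (v t) d = a2"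
    using exists_rotation_offset[OF P N, where v = v and a = a1 and b = a2] v_norm prob_P a
    by auto
  have "v t \<noteq> 0"
    using v_norm[of t] by auto
  show ?thesis
  proof (intro exI conjI)
    show "oriented_hyperplane (e1, c)" "oriented_hyperplane (v t, d)"
      using \<open>e1 \<noteq> 0\<close> \<open>v t \<noteq> 0\<close> by (simp_all add: oriented_hyperplane_def)
    show "prob (hpos (e1, c) \<inter> hpos (v t, d)) = a1"
      "prob (hneg (e1, c) \<inter> hpos (v t, d)) = a2"
      using td by (simp_all add: upper_mass_def hpos_def hneg_def P_def N_def)
    show "prob (hpos (e1, c) \<inter> hneg (v t, d)) = a3"
      "prob (hneg (e1, c) \<inter> hneg (v t, d)) = a4"
      using lower_mass_eq[OF P \<open>v t \<noteq> 0\<close>, of d] lower_mass_eq[OF N \<open>v t \<noteq> 0\<close>, of d]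
        td prob_P prob_N
      by (simp_all add: hpos_def hneg_def P_def N_def)
  qed
qed

end

theorem mainTheorem7:
  fixes \<mu> :: "'a::euclidean_space measure" and \<alpha> :: "nat \<Rightarrow> real"
  assumes "DIM('a) \<ge> 2"
    and "continuous_prob_measure \<mu>"
    and "\<And>i. i \<in> {1..4} \<Longrightarrow> 0 < \<alpha> i \<and> \<alpha> i < 1"
    and "(\<Sum>i=1..4. \<alpha> i) = 1"
  shows "\<exists>H1 H2. oriented_hyperplane H1 \<and> oriented_hyperplane H2 \<and>
           measure \<mu> (hpos H1 \<inter> hpos H2) = \<alpha> 1 \<and>
           measure \<mu> (hneg H1 \<inter> hpos H2) = \<alpha> 2 \<and>
           measure \<mu> (hpos H1 \<inter> hneg H2) = \<alpha> 3 \<and>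
           measure \<mu> (hneg H1 \<inter> hneg H2) = \<alpha> 4"
proof -
  interpret continuous_prob_space \<mu>
    using assms(2) unfolding continuous_prob_measure_def
    by (simp add: continuous_prob_space_def continuous_prob_space_axioms_def)
  obtain e1 :: 'a where e1: "e1 \<in> Basis"
    using nonempty_Basis by blast
  have "card (Basis - {e1}) \<ge> 1"
    using assms(1) e1 by simp
  then have "Basis - {e1} \<noteq> {}"
    by (metis card.empty not_one_le_zero)
  then obtain e2 where e2: "e2 \<in> Basis" "e2 \<noteq> e1"
    by blast
  have "\<alpha> 1 + \<alpha> 2 + \<alpha> 3 + \<alpha> 4 = 1"
    using assms(4) by (simp add: numeral_eq_Suc)
  then show ?thesis
    using four_quadrants[of e1 e2 "\<alpha> 1" "\<alpha> 2" "\<alpha> 3" "\<alpha> 4"] assms(3)[of 1] assms(3)[of 2]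
      assms(3)[of 3] assms(3)[of 4] e1 e2 inner_Basis[OF e1 e2(1)] by auto
qed

end
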